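(* Let $(G,\alpha)$ be a finite Hom-group and $H\preceq G$. Then the set of left cosets $\{gH: g\in G\}$, where $gH=\{gh:h\in H\}$, is a partition of $G$.
   Context: A Hom-group is a tuple $(G,\mu,1,\alpha)$ where $G$ is a set, $\mu:G\times G\to G$ is a binary operation written $\mu(g,h)=gh$, $1\in G$ is a distinguished element, and $\alpha:G\to G$ is a bijection, such that: (1) Hom-associativity: $\alpha(g)(hk)=(gh)\alpha(k)$ for all $g,h,k\in G$; (2) $\alpha(gk)=\alpha(g)\alpha(k)$ for all $g,k$; (3) Hom-unitality: $g1=1g=\alpha(g)$ for all $g$, and $\alpha(1)=1$; (4) for every $g\in G$ there exists $g^{-1}\in G$ with $gg^{-1}=g^{-1}g=1$ (such an inverse is unique). A Hom-subgroup of $(G,\alpha)$ is a subset $H\subseteq G$ such that $H$, with the restriction of the multiplication of $G$, the element $1$, and the restriction of $\alpha$, is itself a Hom-group (in particular $1\in H$, $H$ is closed under multiplication and inverses, and $\alpha$ restricts to a bijection $H\to H$). We write $H\preceq G$. *)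

theory Defs
  imports Main "HOL-Library.Disjoint_Sets"
begin

definition hom_group :: "'a set \<Rightarrow> ('a \<Rightarrow> 'a \<Rightarrow> 'a) \<Rightarrow> 'a \<Rightarrow> ('a \<Rightarrow> 'a) \<Rightarrow> bool" where
  "hom_group G mult one alpha \<longleftrightarrow>
     (\<forall>g\<in>G. \<forall>h\<in>G. mult g h \<in> G) \<and>
     one \<in> G \<and>
     bij_betw alpha G G \<and>
     (\<forall>g\<in>G. \<forall>h\<in>G. \<forall>k\<in>G. mult (alpha g) (mult h k) = mult (mult g h) (alpha k)) \<and>
     (\<forall>g\<in>G. \<forall>k\<in>G. alpha (mult g k) = mult (alpha g) (alpha k)) \<and>
     (\<forall>g\<in>G. mult g one = alpha g \<and> mult one g = alpha g) \<and>
     alpha one = one \<and>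
     (\<forall>g\<in>G. \<exists>g'\<in>G. mult g g' = one \<and> mult g' g = one)"

definition hom_subgroup :: "'a set \<Rightarrow> 'a set \<Rightarrow> ('a \<Rightarrow> 'a \<Rightarrow> 'a) \<Rightarrow> 'a \<Rightarrow> ('a \<Rightarrow> 'a) \<Rightarrow> bool" where
  "hom_subgroup H G mult one alpha \<longleftrightarrow> H \<subseteq> G \<and> hom_group H mult one alpha"

definition hom_lcoset :: "('a \<Rightarrow> 'a \<Rightarrow> 'a) \<Rightarrow> 'a \<Rightarrow> 'a set \<Rightarrow> 'a set" where
  "hom_lcoset mult g H = (\<lambda>h. mult g h) ` H"

end

theory Submission
  imports Defs "HOL-Algebra.Left_Coset"
begin

text \<open>Untwisting: \<open>x \<star> y = \<alpha>\<inverse>(x y)\<close> makes \<open>G\<close> an ordinary group with the same unit,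
  Hom-associativity becoming associativity after applying \<open>\<alpha>\<inverse>\<close> twice. A Hom-subgroup \<open>H\<close> is
  an ordinary subgroup of it, and \<open>g H = \<alpha> (g \<star> H)\<close>. So the Hom-cosets are the images under
  the bijection \<open>\<alpha>\<close> of the ordinary left cosets, which partition \<open>G\<close>.\<close>

definition untwist :: "'a set \<Rightarrow> ('a \<Rightarrow> 'a \<Rightarrow> 'a) \<Rightarrow> 'a \<Rightarrow> ('a \<Rightarrow> 'a) \<Rightarrow> 'a monoid" where
  "untwist G mul e alpha = \<lparr>carrier = G, mult = \<lambda>x y. inv_into G alpha (mul x y), one = e\<rparr>"

lemma carrier_untwist [simp]: "carrier (untwist G mul e alpha) = G"
  by (simp add: untwist_def)

context
  fixes G :: "'a set" and mult :: "'a \<Rightarrow> 'a \<Rightarrow> 'a" and one :: 'a and alpha :: "'a \<Rightarrow> 'a"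
  assumes hom_group: "hom_group G mult one alpha"
begin

private lemma mult_closed: "x \<in> G \<Longrightarrow> y \<in> G \<Longrightarrow> mult x y \<in> G"
  and one_closed: "one \<in> G"
  and alpha_bij: "bij_betw alpha G G"
  and hom_assoc: "x \<in> G \<Longrightarrow> y \<in> G \<Longrightarrow> z \<in> G \<Longrightarrow> mult (alpha x) (mult y z) = mult (mult x y) (alpha z)"
  and alpha_mult: "x \<in> G \<Longrightarrow> y \<in> G \<Longrightarrow> alpha (mult x y) = mult (alpha x) (alpha y)"
  and hom_left_unit: "x \<in> G \<Longrightarrow> mult one x = alpha x"
  and alpha_one: "alpha one = one"
  and hom_inverse: "x \<in> G \<Longrightarrow> \<exists>x'\<in>G. mult x x' = one \<and> mult x' x = one"
  using hom_group unfolding hom_group_def by blast+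

private abbreviation alpha_inv :: "'a \<Rightarrow> 'a" where
  "alpha_inv \<equiv> inv_into G alpha"

private lemma alpha_inv_closed: "x \<in> G \<Longrightarrow> alpha_inv x \<in> G"
  using alpha_bij by (metis bij_betw_def inv_into_into)

private lemma alpha_alpha_inv: "x \<in> G \<Longrightarrow> alpha (alpha_inv x) = x"
  using alpha_bij by (meson bij_betw_inv_into_right)

private lemma alpha_inv_alpha: "x \<in> G \<Longrightarrow> alpha_inv (alpha x) = x"
  using alpha_bij by (meson bij_betw_inv_into_left)

private lemma alpha_inv_mult:
  assumes "x \<in> G" "y \<in> G"
  shows "alpha_inv (mult x y) = mult (alpha_inv x) (alpha_inv y)"
proof -
  have "mult x y = alpha (mult (alpha_inv x) (alpha_inv y))"
    using assms by (simp add: alpha_mult alpha_inv_closed alpha_alpha_inv)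
  then show ?thesis
    using assms by (simp add: alpha_inv_alpha mult_closed alpha_inv_closed)
qed

private lemma alpha_inv_mult_left:
  "w \<in> G \<Longrightarrow> z \<in> G \<Longrightarrow> mult (alpha_inv w) z = alpha_inv (mult w (alpha z))"
  using alpha_inv_mult[of w "alpha z"] by (simp add: alpha_inv_alpha bij_betw_apply[OF alpha_bij])

private lemma alpha_inv_mult_right:
  "x \<in> G \<Longrightarrow> w \<in> G \<Longrightarrow> mult x (alpha_inv w) = alpha_inv (mult (alpha x) w)"
  using alpha_inv_mult[of "alpha x" w] by (simp add: alpha_inv_alpha bij_betw_apply[OF alpha_bij])

private lemma untwisted_assoc:
  assumes "x \<in> G" "y \<in> G" "z \<in> G"
  shows "alpha_inv (mult (alpha_inv (mult x y)) z) = alpha_inv (mult x (alpha_inv (mult y z)))"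
proof -
  have "alpha_inv (mult (alpha_inv (mult x y)) z)
      = alpha_inv (alpha_inv (mult (mult x y) (alpha z)))"
    using assms by (simp add: alpha_inv_mult_left mult_closed)
  also have "\<dots> = alpha_inv (alpha_inv (mult (alpha x) (mult y z)))"
    using assms by (simp add: hom_assoc)
  also have "\<dots> = alpha_inv (mult x (alpha_inv (mult y z)))"
    using assms by (simp add: alpha_inv_mult_right mult_closed)
  finally show ?thesis .
qed

private lemma untwisted_left_inverse: "x \<in> G \<Longrightarrow> \<exists>y\<in>G. alpha_inv (mult y x) = one"
  using hom_inverse alpha_inv_alpha alpha_one one_closed by metis

lemma group_untwist: "group (untwist G mult one alpha)"
  by (rule groupI)
    (auto simp: untwist_def mult_closed one_closed alpha_inv_closed hom_left_unit alpha_inv_alpha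
      untwisted_assoc untwisted_left_inverse)

lemma subgroup_untwist:
  assumes "hom_subgroup H G mult one alpha"
  shows "subgroup H (untwist G mult one alpha)"
proof -
  interpret untwisted: group "untwist G mult one alpha"
    by (rule group_untwist)
  have HG: "H \<subseteq> G" and H: "hom_group H mult one alpha"
    using assms unfolding hom_subgroup_def by blast+
  have alpha_inv_H: "alpha_inv x \<in> H" if "x \<in> H" for x
  proof -
    obtain y where "y \<in> H" "x = alpha y"
      using H \<open>x \<in> H\<close> unfolding hom_group_def bij_betw_def by blast
    then show ?thesis
      using HG by (auto simp: alpha_inv_alpha)
  qed
  show ?thesis
  proof (rule untwisted.subgroupI)
    show "H \<subseteq> carrier (untwist G mult one alpha)" "H \<noteq> {}"
      using HG H unfolding untwist_def hom_group_def by auto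
    show "x \<otimes>\<^bsub>untwist G mult one alpha\<^esub> y \<in> H" if "x \<in> H" "y \<in> H" for x y
      using that H alpha_inv_H unfolding untwist_def hom_group_def by simp
    show "inv\<^bsub>untwist G mult one alpha\<^esub> x \<in> H" if x: "x \<in> H" for x
    proof -
      obtain x' where x': "x' \<in> H" "mult x' x = one"
        using H x unfolding hom_group_def by blast
      have "inv\<^bsub>untwist G mult one alpha\<^esub> x = x'"
        using x x' HG alpha_inv_alpha[OF one_closed]
        by (intro untwisted.inv_equality) (auto simp: untwist_def alpha_one)
      with x' show ?thesis
        by simp
    qed
  qed
qed

lemma hom_lcoset_eq_image_l_coset:
  assumes "g \<in> G" "H \<subseteq> G"
  shows "hom_lcoset mult g H = alpha ` (g <#\<^bsub>untwist G mult one alpha\<^esub> H)"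
proof -
  have l_coset_eq: "g <#\<^bsub>untwist G mult one alpha\<^esub> H = (\<lambda>h. alpha_inv (mult g h)) ` H"
    unfolding l_coset_def untwist_def by auto
  show ?thesis
    unfolding hom_lcoset_def l_coset_eq image_image
    by (rule image_cong) (use assms in \<open>auto simp: alpha_alpha_inv mult_closed\<close>)
qed

lemma image_lcosets_untwist:
  assumes "H \<subseteq> G"
  shows "(`) alpha ` (lcosets\<^bsub>untwist G mult one alpha\<^esub> H) = {hom_lcoset mult g H | g. g \<in> G}"
  using hom_lcoset_eq_image_l_coset[OF _ assms] by (auto simp: LCOSETS_def)

end

lemma (in group) partition_on_lcosets:
  assumes "subgroup H G"
  shows "partition_on (carrier G) (lcosets H)"
proof (rule partition_onI)
  show "\<Union> (lcosets H) = carrier G"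
    using lcosets_part_G assms .
  show "disjnt p q" if "p \<in> lcosets H" "q \<in> lcosets H" "p \<noteq> q" for p q
    using lcos_disjoint[OF assms that] by (simp add: disjnt_def)
  show "{} \<notin> lcosets H"
    using lcos_self[OF _ assms] by (auto simp: LCOSETS_def)
qed

lemma partition_on_bij_betw_image:
  assumes "partition_on A P" "bij_betw f A B"
  shows "partition_on B ((`) f ` P)"
proof -
  have "(`) f ` P - {{}} = (`) f ` P"
    using partition_onD3[OF assms(1)] by auto
  moreover have "partition_on (f ` A) ((`) f ` P - {{}})"
    using partition_on_inj_image[OF assms(1), where f = f] assms(2) by (simp add: bij_betw_def)
  ultimately show ?thesis
    using assms(2) by (simp add: bij_betw_def)
qed

theorem mainTheorem8:
  fixes G H :: "'a set" and mult :: "'a \<Rightarrow> 'a \<Rightarrow> 'a" and one :: 'a and alpha :: "'a \<Rightarrow> 'a"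
  assumes "hom_group G mult one alpha"
    and "finite G"
    and "hom_subgroup H G mult one alpha"
  shows "partition_on G {hom_lcoset mult g H | g. g \<in> G}"
proof -
  have HG: "H \<subseteq> G" and alpha_bij: "bij_betw alpha G G"
    using assms(1,3) unfolding hom_subgroup_def hom_group_def by blast+
  have "partition_on G (lcosets\<^bsub>untwist G mult one alpha\<^esub> H)"
    using group.partition_on_lcosets[OF group_untwist[OF assms(1)] subgroup_untwist[OF assms(1,3)]]
    by simp
  from partition_on_bij_betw_image[OF this alpha_bij] show ?thesis
    unfolding image_lcosets_untwist[OF assms(1) HG] .
qed

end
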